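(* Let $\mu,\nu$ be continuous probability distributions on $\mathbb{R}^d$ and let $q\ge 1$. Then for every $\sigma>0$, $\mathrm{DP}_\sigma\mathrm{SWD}_q^q(\mu,\nu)=0$ if and only if $\mu=\nu$.
   Context: For $\mathbf{u}\in\mathbb{S}^{d-1}=\{\mathbf{u}\in\mathbb{R}^d:\|\mathbf{u}\|_2=1\}$, $\mathcal{R}_\mathbf{u}\mu$ denotes the push-forward of $\mu$ by the map $\mathbf{x}\mapsto\mathbf{u}^\top\mathbf{x}$ (a probability measure on $\mathbb{R}$). $\mathcal{N}_\sigma$ is the centered Gaussian distribution $\mathcal{N}(0,\sigma^2)$ on $\mathbb{R}$ and $*$ denotes convolution of measures. For probability measures $\mu',\nu'$ on $\mathbb{R}$, $W_q(\mu',\nu')=\big(\int_0^1|F_{\mu'}^{-1}(z)-F_{\nu'}^{-1}(z)|^q dz\big)^{1/q}$ is the $q$-Wasserstein distance (Euclidean ground cost), $F^{-1}$ being the inverse cumulative distribution function. With $u_d$ the uniform probability measure on $\mathbb{S}^{d-1}$, $$\mathrm{DP}_\sigma\mathrm{SWD}_q^q(\mu,\nu)\doteq\int_{\mathbb{S}^{d-1}}W_q^q(\mathcal{R}_\mathbf{u}\mu*\mathcal{N}_\sigma,\ \mathcal{R}_\mathbf{u}\nu*\mathcal{N}_\sigma)\,du_d(\mathbf{u}).$$ *)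

theory Defs
  imports "HOL-Probability.Probability"
begin

definition radon_proj :: "'a::euclidean_space \<Rightarrow> 'a measure \<Rightarrow> real measure" where
  "radon_proj u M = distr M borel (\<lambda>x. u \<bullet> x)"

definition gauss_measure :: "real \<Rightarrow> real measure" where
  "gauss_measure \<sigma> = density lborel (normal_density 0 \<sigma>)"

definition quantile :: "real measure \<Rightarrow> real \<Rightarrow> real" where
  "quantile M z = Inf {x. z \<le> cdf M x}"

text \<open>q-th power of the 1D q-Wasserstein distance, via quantile functions
  (as an extended nonnegative real, possibly infinite).\<close>
definition wasserstein_pow :: "real \<Rightarrow> real measure \<Rightarrow> real measure \<Rightarrow> ennreal" where
  "wasserstein_pow q M N =
     (\<integral>\<^sup>+ z \<in> {0<..<1}. ennreal (\<bar>quantile M z - quantile N z\<bar> powr q) \<partial>lborel)"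

text \<open>Uniform probability measure on the unit sphere S^{d-1}: the normalized surface
  measure, realized as the push-forward of the uniform distribution on the unit ball
  under radial projection x \<mapsto> x / |x|.\<close>
definition sphere_uniform :: "'a::euclidean_space measure" where
  "sphere_uniform = distr (uniform_measure lborel (ball 0 1)) borel (\<lambda>x. sgn x)"

definition DPSWD_pow :: "real \<Rightarrow> real \<Rightarrow> 'a::euclidean_space measure \<Rightarrow> 'a measure \<Rightarrow> ennreal" where
  "DPSWD_pow \<sigma> q \<mu> \<nu> =
     (\<integral>\<^sup>+ u. wasserstein_pow q (radon_proj u \<mu> \<star> gauss_measure \<sigma>)
                                 (radon_proj u \<nu> \<star> gauss_measure \<sigma>) \<partial>sphere_uniform)"

end

theory Submission
  imports Defs
begin

text \<open>
  The characteristic function of \<open>\<R>\<^sub>u\<mu> * \<N>\<^sub>\<sigma>\<close> at frequency \<open>s\<close> is that of \<open>\<mu>\<close> at \<open>s u\<close> times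
  the Gaussian factor \<open>exp (-(\<sigma> s)\<^sup>2/2)\<close>, which never vanishes. On the other hand,
  coupling two laws on the line through their quantile functions shows that a difference
  \<open>D\<close> of their characteristic functions at frequency \<open>s\<close> forces the quantiles to be
  \<open>D/(2s)\<close> apart on a set of measure at least \<open>D/4\<close>, which bounds \<open>W\<^sub>q\<^sup>q\<close> from below.
  If \<open>\<mu> \<noteq> \<nu>\<close>, their characteristic functions differ at some \<open>t = s u\<^sub>0 \<noteq> 0\<close>, by continuity
  also at \<open>s u\<close> for all directions \<open>u\<close> in a cap around \<open>u\<^sub>0\<close>, and such a cap has positive
  uniform measure; hence the sliced distance is positive.

  Uniqueness of the characteristic function on \<open>\<real>\<^sup>d\<close> comes from Stone--Weierstrass:
  polynomials in the coordinates of the torus map \<open>x \<mapsto> (cos (\<omega> x\<^sub>i), sin (\<omega> x\<^sub>i))\<^sub>i\<close> are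
  trigonometric polynomials, whose integrals are determined by the characteristic function,
  and they approximate periodizations of continuous functions of compact support, which in
  turn determine the measure of closed sets.
\<close>

section \<open>Characteristic functions of smoothed projections\<close>

definition char_euclidean :: "'a::euclidean_space measure \<Rightarrow> 'a \<Rightarrow> complex" where
  "char_euclidean M t = (CLINT x|M. iexp (t \<bullet> x))"

definition smoothed_radon_proj :: "real \<Rightarrow> 'a::euclidean_space \<Rightarrow> 'a measure \<Rightarrow> real measure" where
  "smoothed_radon_proj \<sigma> u M = (radon_proj u M \<star> gauss_measure \<sigma>)"

lemma char_convolution:
  fixes M N :: "real measure"
  assumes "prob_space M" "sets M = sets borel" "prob_space N" "sets N = sets borel"
  shows "char (M \<star> N) s = char M s * char N s"
proof -
  interpret pair_prob_space M N
    using assms by (simp add: pair_prob_space_def pair_sigma_finite_def prob_space_imp_sigma_finite)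
  have [measurable_cong]: "sets M = sets borel" "sets N = sets borel"
    using assms by auto
  have "char (M \<star> N) s = (\<integral>z. (\<lambda>(x, y). iexp (s * x) * iexp (s * y)) z \<partial>(M \<Otimes>\<^sub>M N))"
    unfolding char_def convolution_def
    by (subst integral_distr) (auto intro!: Bochner_Integration.integral_cong
        simp: field_simps exp_add split: prod.splits)
  also have "\<dots> = (\<integral>x. (\<integral>y. iexp (s * x) * iexp (s * y) \<partial>N) \<partial>M)"
    by (rule integral_fst[symmetric], rule integrable_const_bound[where B=1]) (auto simp: norm_mult)
  also have "\<dots> = char M s * char N s"
    unfolding char_def by simp
  finally show ?thesis .
qed

lemma char_gauss_measure:
  assumes "\<sigma> > 0"
  shows "char (gauss_measure \<sigma>) s = exp (- (\<sigma> * s)\<^sup>2 / 2)"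
proof -
  have density: "\<bar>\<sigma>\<bar> * normal_density 0 \<sigma> (\<sigma> * y) = std_normal_density y" for y
    using assms by (simp add: normal_density_def real_sqrt_mult field_simps power_mult_distrib)
  have "char (gauss_measure \<sigma>) s = (\<integral>x. normal_density 0 \<sigma> x *\<^sub>R iexp (s * x) \<partial>lborel)"
    unfolding char_def gauss_measure_def by (subst integral_density) auto
  also have "\<dots> = \<bar>\<sigma>\<bar> *\<^sub>R (\<integral>y. normal_density 0 \<sigma> (0 + \<sigma> * y) *\<^sub>R iexp (s * (0 + \<sigma> * y)) \<partial>lborel)"
    using assms by (intro lborel_integral_real_affine) auto
  also have "\<dots> = (\<integral>y. std_normal_density y *\<^sub>R iexp ((\<sigma> * s) * y) \<partial>lborel)"
    by (simp only: integral_scaleR_right[symmetric] scaleR_scaleR)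
       (intro Bochner_Integration.integral_cong; simp add: density[symmetric] ac_simps)
  also have "\<dots> = char std_normal_distribution (\<sigma> * s)"
    unfolding char_def by (subst integral_density) auto
  finally show ?thesis
    by (simp add: char_std_normal_distribution)
qed

lemma prob_space_radon_proj:
  assumes "prob_space M" "sets M = sets borel"
  shows "prob_space (radon_proj u M)"
  unfolding radon_proj_def using assms by (intro prob_space.prob_space_distr) auto

lemma char_radon_proj:
  assumes "sets M = sets borel"
  shows "char (radon_proj u M) s = char_euclidean M (s *\<^sub>R u)"
  using assms unfolding char_def radon_proj_def char_euclidean_def
  by (subst integral_distr) auto

lemma real_distribution_smoothed_radon_proj:
  assumes "prob_space M" "sets M = sets borel" "\<sigma> > 0"
  shows "real_distribution (smoothed_radon_proj \<sigma> u M)"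
proof -
  interpret pair_prob_space "radon_proj u M" "gauss_measure \<sigma>"
    using prob_space_radon_proj[OF assms(1,2)] prob_space_normal_density[OF assms(3)]
    by (simp add: pair_prob_space_def pair_sigma_finite_def prob_space_imp_sigma_finite gauss_measure_def)
  have "prob_space (smoothed_radon_proj \<sigma> u M)"
    unfolding smoothed_radon_proj_def convolution_def
    by (rule prob_space_distr) (auto simp: radon_proj_def gauss_measure_def)
  then show ?thesis
    by (auto simp: real_distribution_def real_distribution_axioms_def smoothed_radon_proj_def)
qed

lemma char_smoothed_radon_proj:
  assumes "prob_space M" "sets M = sets borel" "\<sigma> > 0"
  shows "char (smoothed_radon_proj \<sigma> u M) s = char_euclidean M (s *\<^sub>R u) * exp (- (\<sigma> * s)\<^sup>2 / 2)"
  using char_convolution[OF prob_space_radon_proj[OF assms(1,2)] _ prob_space_normal_density[OF assms(3)]]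
    char_radon_proj[OF assms(2)] char_gauss_measure[OF assms(3)]
  by (simp add: smoothed_radon_proj_def radon_proj_def gauss_measure_def)

lemma char_euclidean_zero:
  assumes "prob_space M"
  shows "char_euclidean M 0 = 1"
  using prob_space.prob_space[OF assms] by (simp add: char_euclidean_def)

lemma isCont_char_euclidean:
  assumes "prob_space M" "sets M = sets borel"
  shows "isCont (char_euclidean M) t"
  unfolding continuous_at_sequentially comp_def
proof safe
  interpret prob_space M by fact
  have [measurable_cong]: "sets M = sets borel" by fact
  fix X assume "X \<longlonglongrightarrow> t"
  then show "(\<lambda>n. char_euclidean M (X n)) \<longlonglongrightarrow> char_euclidean M t"
    unfolding char_euclidean_def
    by (intro integral_dominated_convergence[where w="\<lambda>_. 1"]) (auto intro!: tendsto_intros)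
qed

section \<open>Characteristic functions bound the one-dimensional Wasserstein distance\<close>

lemma norm_iexp_diff_le: "cmod (iexp a - iexp b) \<le> \<bar>a - b\<bar>"
proof -
  have "iexp a - iexp b = iexp b * (iexp (a - b) - 1)"
    by (simp add: algebra_simps exp_diff[symmetric] exp_add[symmetric])
  then have "cmod (iexp a - iexp b) = cmod (iexp (a - b) - 1)"
    by (simp add: norm_mult)
  then show ?thesis
    using iexp_approx1[of "a - b" 0] by simp
qed

lemma norm_iexp_diff_le_2: "cmod (iexp a - iexp b) \<le> 2"
  using norm_triangle_ineq4[of "iexp a" "iexp b"] by simp

lemma prob_space_unit_interval: "prob_space (restrict_space lborel {0<..<1::real})"
  by (auto simp: emeasure_restrict_space space_restrict_space intro!: prob_spaceI)

lemma quantile_measurable: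
  assumes "real_distribution M"
  shows "quantile M \<in> borel_measurable (restrict_space lborel {0<..<1})"
proof -
  interpret cdf_distribution M
    using assms by (simp add: cdf_distribution_def)
  have "sets (restrict_space lborel {0<..<1::real}) = sets (restrict_space borel {0<..<1})"
    by (simp add: sets_restrict_space)
  then show ?thesis
    using measurable_CI by (simp add: quantile_def[abs_def] cong: measurable_cong_sets)
qed

lemma char_eq_integral_quantile:
  assumes "real_distribution M"
  shows "char M s = (\<integral>z. iexp (s * quantile M z) \<partial>restrict_space lborel {0<..<1})"
proof -
  interpret cdf_distribution M
    using assms by (simp add: cdf_distribution_def)
  have "M = distr (restrict_space lborel {0<..<1}) borel (quantile M)"
    using distr_I_eq_M by (simp add: quantile_def[abs_def])
  then have "char M s = char (distr (restrict_space lborel {0<..<1}) borel (quantile M)) s"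
    by simp
  also have "\<dots> = (\<integral>z. iexp (s * quantile M z) \<partial>restrict_space lborel {0<..<1})"
    unfolding char_def using quantile_measurable[OF assms] by (simp add: integral_distr)
  finally show ?thesis .
qed

lemma (in prob_space) integral_le_threshold_plus_prob:
  fixes f :: "'a \<Rightarrow> real"
  assumes [measurable]: "f \<in> borel_measurable M"
    and "\<And>x. 0 \<le> f x" "\<And>x. f x \<le> b" "0 \<le> c"
  shows "(\<integral>x. f x \<partial>M) \<le> c + b * prob {x \<in> space M. c \<le> f x}"
proof -
  let ?E = "{x \<in> space M. c \<le> f x}"
  have "(\<integral>x. f x \<partial>M) \<le> (\<integral>x. c + b * indicator ?E x \<partial>M)"
  proof (rule integral_mono)
    show "integrable M f"
      using assms by (intro integrable_const_bound[where B=b]) auto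
    show "f x \<le> c + b * indicator ?E x" if "x \<in> space M" for x
      using assms(2,3)[of x] assms(4) that by (cases "c \<le> f x") auto
  qed (auto simp: emeasure_eq_measure)
  also have "\<dots> = c + b * prob ?E"
    by (simp add: prob_space emeasure_eq_measure)
  finally show ?thesis .
qed

lemma wasserstein_pow_ge_markov:
  assumes "real_distribution M" "real_distribution N" "0 \<le> c" "0 \<le> q"
  shows "ennreal (c powr q * measure (restrict_space lborel {0<..<1})
           {z \<in> {0<..<1}. c \<le> \<bar>quantile M z - quantile N z\<bar>}) \<le> wasserstein_pow q M N"
proof -
  define \<Omega> where "\<Omega> = restrict_space lborel {0<..<1::real}"
  define E where "E = {z \<in> {0<..<1}. c \<le> \<bar>quantile M z - quantile N z\<bar>}"
  interpret \<Omega>: prob_space \<Omega>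
    unfolding \<Omega>_def by (rule prob_space_unit_interval)
  have [measurable]: "quantile M \<in> borel_measurable \<Omega>" "quantile N \<in> borel_measurable \<Omega>"
    unfolding \<Omega>_def using assms quantile_measurable by auto
  have "{z \<in> space \<Omega>. c \<le> \<bar>quantile M z - quantile N z\<bar>} \<in> sets \<Omega>"
    by measurable
  then have "E \<in> sets \<Omega>"
    by (simp add: E_def \<Omega>_def space_restrict_space)
  then have "ennreal (c powr q * measure \<Omega> E) = (\<integral>\<^sup>+z. ennreal (c powr q) * indicator E z \<partial>\<Omega>)"
    by (simp add: nn_integral_cmult_indicator \<Omega>.emeasure_eq_measure ennreal_mult)
  also have "\<dots> \<le> (\<integral>\<^sup>+z. ennreal (\<bar>quantile M z - quantile N z\<bar> powr q) \<partial>\<Omega>)"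
    using assms(3,4) by (intro nn_integral_mono) (auto simp: E_def indicator_def powr_mono2)
  also have "\<dots> = wasserstein_pow q M N"
    unfolding wasserstein_pow_def \<Omega>_def by (simp add: nn_integral_restrict_space)
  finally show ?thesis
    by (simp add: \<Omega>_def E_def)
qed

lemma char_diff_le_prob_quantile_gap:
  assumes M: "real_distribution M" and N: "real_distribution N" and "s > 0"
  shows "cmod (char M s - char N s) / 4 \<le> measure (restrict_space lborel {0<..<1})
           {z \<in> {0<..<1}. cmod (char M s - char N s) / (2 * s) \<le> \<bar>quantile M z - quantile N z\<bar>}"
proof -
  define \<Omega> where "\<Omega> = restrict_space lborel {0<..<1::real}"
  define D where "D = cmod (char M s - char N s)"
  define m where "m z = cmod (iexp (s * quantile M z) - iexp (s * quantile N z))" for z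
  interpret \<Omega>: prob_space \<Omega>
    unfolding \<Omega>_def by (rule prob_space_unit_interval)
  have [measurable]: "quantile M \<in> borel_measurable \<Omega>" "quantile N \<in> borel_measurable \<Omega>"
    unfolding \<Omega>_def using M N quantile_measurable by auto
  have "D = cmod (\<integral>z. iexp (s * quantile M z) - iexp (s * quantile N z) \<partial>\<Omega>)"
    unfolding D_def char_eq_integral_quantile[OF M] char_eq_integral_quantile[OF N] \<Omega>_def[symmetric]
    by (subst Bochner_Integration.integral_diff) (auto intro!: \<Omega>.integrable_const_bound[where B=1])
  also have "\<dots> \<le> (\<integral>z. m z \<partial>\<Omega>)"
    unfolding m_def by (rule integral_norm_bound)
  also have "\<dots> \<le> D / 2 + 2 * \<Omega>.prob {z \<in> space \<Omega>. D / 2 \<le> m z}"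
    by (rule \<Omega>.integral_le_threshold_plus_prob) (auto simp: m_def D_def simp del: of_real_mult
        intro!: norm_iexp_diff_le_2)
  finally have "D / 4 \<le> \<Omega>.prob {z \<in> space \<Omega>. D / 2 \<le> m z}"
    by simp
  also have "\<dots> \<le> \<Omega>.prob {z \<in> {0<..<1}. D / (2 * s) \<le> \<bar>quantile M z - quantile N z\<bar>}"
  proof (rule \<Omega>.finite_measure_mono)
    have "m z \<le> s * \<bar>quantile M z - quantile N z\<bar>" for z
    proof -
      have "m z \<le> \<bar>s * quantile M z - s * quantile N z\<bar>"
        unfolding m_def by (rule norm_iexp_diff_le)
      also have "\<dots> = s * \<bar>quantile M z - quantile N z\<bar>"
        using \<open>s > 0\<close> by (simp add: abs_mult right_diff_distrib[symmetric])
      finally show ?thesis .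
    qed
    then show "{z \<in> space \<Omega>. D / 2 \<le> m z} \<subseteq> {z \<in> {0<..<1}. D / (2 * s) \<le> \<bar>quantile M z - quantile N z\<bar>}"
      using \<open>s > 0\<close> by (auto simp: \<Omega>_def space_restrict_space field_simps intro: order_trans)
    have "{z \<in> space \<Omega>. D / (2 * s) \<le> \<bar>quantile M z - quantile N z\<bar>} \<in> sets \<Omega>"
      by measurable
    then show "{z \<in> {0<..<1}. D / (2 * s) \<le> \<bar>quantile M z - quantile N z\<bar>} \<in> sets \<Omega>"
      by (simp add: \<Omega>_def space_restrict_space)
  qed
  finally show ?thesis
    by (simp add: D_def \<Omega>_def)
qed

lemma wasserstein_pow_ge_char_diff:
  assumes M: "real_distribution M" and N: "real_distribution N" and "s > 0" "0 \<le> q"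
  shows "ennreal ((cmod (char M s - char N s) / (2 * s)) powr q * (cmod (char M s - char N s) / 4))
           \<le> wasserstein_pow q M N"
proof -
  define D where "D = cmod (char M s - char N s)"
  have "(D / (2 * s)) powr q * (D / 4) \<le> (D / (2 * s)) powr q * measure (restrict_space lborel {0<..<1})
      {z \<in> {0<..<1}. D / (2 * s) \<le> \<bar>quantile M z - quantile N z\<bar>}"
    using char_diff_le_prob_quantile_gap[OF M N \<open>s > 0\<close>] by (intro mult_left_mono) (auto simp: D_def)
  then have "ennreal ((D / (2 * s)) powr q * (D / 4)) \<le> ennreal ((D / (2 * s)) powr q *
      measure (restrict_space lborel {0<..<1}) {z \<in> {0<..<1}. D / (2 * s) \<le> \<bar>quantile M z - quantile N z\<bar>})"
    by (rule ennreal_leI)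
  also have "\<dots> \<le> wasserstein_pow q M N"
    using M N \<open>s > 0\<close> \<open>0 \<le> q\<close> by (intro wasserstein_pow_ge_markov) (auto simp: D_def)
  finally show ?thesis
    by (simp add: D_def)
qed

section \<open>Caps of the sphere have positive uniform measure\<close>

lemma sgn_near_if_near_half:
  fixes u x :: "'a::real_normed_vector"
  assumes "norm u = 1" and "dist x (u /\<^sub>R 2) < min (1/4) (r/4)"
  shows "norm x < 1" "dist (sgn x) u < r"
proof -
  define y where "y = 2 *\<^sub>R x"
  have "norm (y - u) = 2 * dist x (u /\<^sub>R 2)"
  proof -
    have "y - u = 2 *\<^sub>R (x - u /\<^sub>R 2)"
      by (simp add: y_def algebra_simps)
    then show ?thesis
      by (simp add: dist_norm)
  qed
  then have yu: "norm (y - u) < min (1/2) (r/2)"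
    using assms(2) by simp
  have norm_y: "\<bar>norm y - 1\<bar> \<le> norm (y - u)"
    using norm_triangle_ineq3[of y u] assms(1) by simp
  then show "norm x < 1"
    using yu unfolding y_def by simp linarith
  have "y \<noteq> 0"
    using norm_y yu by auto
  have "norm (sgn y - y) = \<bar>1 - norm y\<bar>"
  proof -
    have "sgn y - y = (1 - norm y) *\<^sub>R sgn y"
      using \<open>y \<noteq> 0\<close> by (simp add: sgn_div_norm algebra_simps)
    then show ?thesis
      using \<open>y \<noteq> 0\<close> by (simp add: norm_sgn)
  qed
  then have "dist (sgn y) u \<le> \<bar>1 - norm y\<bar> + norm (y - u)"
    using norm_triangle_ineq[of "sgn y - y" "y - u"] by (simp add: dist_norm)
  also have "\<dots> < r"
    using norm_y yu by linarith
  finally show "dist (sgn x) u < r"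
    by (simp add: y_def sgn_scaleR)
qed

lemma emeasure_lborel_ball_pos: "0 < r \<Longrightarrow> 0 < emeasure lborel (ball (c::'a::euclidean_space) r)"
  using emeasure_lborel_ball_finite[of c r] content_ball_pos[of r c]
  by (simp add: emeasure_eq_ennreal_measure)

lemma emeasure_sphere_uniform_ball_pos:
  fixes u :: "'a::euclidean_space"
  assumes "norm u = 1" "0 < r"
  shows "0 < emeasure sphere_uniform (ball u r)"
proof -
  have [measurable]: "sgn -` ball u r \<in> sets (borel :: 'a measure)"
    using measurable_sets_borel[OF borel_measurable_sgn, of "ball u r"] by simp
  have "ball (u /\<^sub>R 2) (min (1/4) (r/4)) \<subseteq> ball 0 1 \<inter> sgn -` ball u r"
    using sgn_near_if_near_half[OF assms(1)] by (auto simp: dist_commute)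
  then have "emeasure lborel (ball (u /\<^sub>R 2) (min (1/4) (r/4))) \<le> emeasure lborel (ball 0 1 \<inter> sgn -` ball u r)"
    by (intro emeasure_mono) auto
  moreover have "0 < emeasure lborel (ball (u /\<^sub>R 2) (min (1/4) (r/4)))"
    using assms(2) by (intro emeasure_lborel_ball_pos) auto
  moreover have "emeasure sphere_uniform (ball u r)
      = emeasure lborel (ball 0 1 \<inter> sgn -` ball u r) / emeasure lborel (ball (0::'a) 1)"
    unfolding sphere_uniform_def by (simp add: emeasure_distr emeasure_uniform_measure)
  ultimately show ?thesis
    using emeasure_lborel_ball_finite[of "0::'a" 1] by (simp add: ennreal_zero_less_divide)
qed

section \<open>Uniqueness of the multivariate characteristic function\<close>

lemma
  assumes "prob_space M" "sets M = sets borel"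
  shows Re_char_euclidean: "Re (char_euclidean M t) = (\<integral>x. cos (t \<bullet> x) \<partial>M)"
    and Im_char_euclidean: "Im (char_euclidean M t) = (\<integral>x. sin (t \<bullet> x) \<partial>M)"
proof -
  interpret prob_space M by fact
  have [measurable_cong]: "sets M = sets borel" by fact
  have "integrable M (\<lambda>x. cis (t \<bullet> x))"
    unfolding cis_conv_exp by (rule integrable_const_bound[where B=1]) auto
  moreover have "char_euclidean M t = (\<integral>x. cis (t \<bullet> x) \<partial>M)"
    by (simp add: char_euclidean_def cis_conv_exp)
  ultimately show "Re (char_euclidean M t) = (\<integral>x. cos (t \<bullet> x) \<partial>M)"
    and "Im (char_euclidean M t) = (\<integral>x. sin (t \<bullet> x) \<partial>M)"
    by (simp_all flip: integral_Re integral_Im)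
qed

lemma integrable_bounded_continuous:
  fixes f :: "'a::euclidean_space \<Rightarrow> real"
  assumes "prob_space M" "sets M = sets borel" "continuous_on UNIV f" "\<And>x. \<bar>f x\<bar> \<le> B"
  shows "integrable M f"
proof -
  interpret prob_space M by fact
  have [measurable_cong]: "sets M = sets borel" by fact
  have [measurable]: "f \<in> borel_measurable borel"
    using assms(3) by (rule borel_measurable_continuous_onI)
  show ?thesis
    by (rule integrable_const_bound[where B=B]) (use assms(4) in auto)
qed

inductive trig_poly :: "('a::euclidean_space \<Rightarrow> real) \<Rightarrow> bool" where
  trig_poly_cos: "trig_poly (\<lambda>x. c * cos (t \<bullet> x))"
| trig_poly_sin: "trig_poly (\<lambda>x. c * sin (t \<bullet> x))"
| trig_poly_add: "trig_poly f \<Longrightarrow> trig_poly g \<Longrightarrow> trig_poly (\<lambda>x. f x + g x)"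

lemma trig_poly_const: "trig_poly (\<lambda>x. c)"
  using trig_poly_cos[of c 0] by simp

lemma trig_poly_sum:
  "finite A \<Longrightarrow> (\<And>i. i \<in> A \<Longrightarrow> trig_poly (f i)) \<Longrightarrow> trig_poly (\<lambda>x. \<Sum>i\<in>A. f i x)"
  by (induction A rule: finite_induct) (auto intro: trig_poly_const trig_poly_add)

lemma trig_poly_cos_mult_cos: "trig_poly (\<lambda>x. c * cos (t \<bullet> x) * (d * cos (s \<bullet> x)))"
proof -
  have "c * cos (t \<bullet> x) * (d * cos (s \<bullet> x)) =
        (c * d / 2) * cos ((t - s) \<bullet> x) + (c * d / 2) * cos ((t + s) \<bullet> x)" for x
    by (simp add: inner_diff_left inner_add_left cos_diff cos_add algebra_simps)
  then show ?thesis
    by (simp only:) (intro trig_poly.intros)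
qed

lemma trig_poly_cos_mult_sin: "trig_poly (\<lambda>x. c * cos (t \<bullet> x) * (d * sin (s \<bullet> x)))"
proof -
  have "c * cos (t \<bullet> x) * (d * sin (s \<bullet> x)) =
        (c * d / 2) * sin ((t + s) \<bullet> x) + (- c * d / 2) * sin ((t - s) \<bullet> x)" for x
    by (simp add: inner_diff_left inner_add_left sin_diff sin_add algebra_simps)
  then show ?thesis
    by (simp only:) (intro trig_poly.intros)
qed

lemma trig_poly_sin_mult_cos: "trig_poly (\<lambda>x. c * sin (t \<bullet> x) * (d * cos (s \<bullet> x)))"
proof -
  have "c * sin (t \<bullet> x) * (d * cos (s \<bullet> x)) =
        (c * d / 2) * sin ((t + s) \<bullet> x) + (c * d / 2) * sin ((t - s) \<bullet> x)" for x
    by (simp add: inner_diff_left inner_add_left sin_diff sin_add algebra_simps)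
  then show ?thesis
    by (simp only:) (intro trig_poly.intros)
qed

lemma trig_poly_sin_mult_sin: "trig_poly (\<lambda>x. c * sin (t \<bullet> x) * (d * sin (s \<bullet> x)))"
proof -
  have "c * sin (t \<bullet> x) * (d * sin (s \<bullet> x)) =
        (c * d / 2) * cos ((t - s) \<bullet> x) + (- c * d / 2) * cos ((t + s) \<bullet> x)" for x
    by (simp add: inner_diff_left inner_add_left cos_diff cos_add algebra_simps)
  then show ?thesis
    by (simp only:) (intro trig_poly.intros)
qed

lemma trig_poly_cos_mult: "trig_poly g \<Longrightarrow> trig_poly (\<lambda>x. c * cos (t \<bullet> x) * g x)"
proof (induction rule: trig_poly.induct)
  case (trig_poly_add f g)
  then show ?case
    using trig_poly.trig_poly_add[OF trig_poly_add.IH] by (simp add: algebra_simps)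
qed (auto intro: trig_poly_cos_mult_cos trig_poly_cos_mult_sin)

lemma trig_poly_sin_mult: "trig_poly g \<Longrightarrow> trig_poly (\<lambda>x. c * sin (t \<bullet> x) * g x)"
proof (induction rule: trig_poly.induct)
  case (trig_poly_add f g)
  then show ?case
    using trig_poly.trig_poly_add[OF trig_poly_add.IH] by (simp add: algebra_simps)
qed (auto intro: trig_poly_sin_mult_cos trig_poly_sin_mult_sin)

lemma trig_poly_mult: "trig_poly f \<Longrightarrow> trig_poly g \<Longrightarrow> trig_poly (\<lambda>x. f x * g x)"
proof (induction rule: trig_poly.induct)
  case (trig_poly_add f1 f2)
  then show ?case
    using trig_poly.trig_poly_add[OF trig_poly_add.IH] by (simp add: algebra_simps)
qed (auto intro: trig_poly_cos_mult trig_poly_sin_mult)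

lemma trig_poly_continuous: "trig_poly f \<Longrightarrow> continuous_on UNIV f"
  by (induction rule: trig_poly.induct) (auto intro!: continuous_intros)

lemma trig_poly_bounded: "trig_poly f \<Longrightarrow> \<exists>B. \<forall>x. \<bar>f x\<bar> \<le> B"
proof (induction rule: trig_poly.induct)
  case (trig_poly_cos c t)
  have "\<bar>c * cos (t \<bullet> x)\<bar> \<le> \<bar>c\<bar>" for x
    by (simp add: abs_mult mult_left_le)
  then show ?case by blast
next
  case (trig_poly_sin c t)
  have "\<bar>c * sin (t \<bullet> x)\<bar> \<le> \<bar>c\<bar>" for x
    by (simp add: abs_mult mult_left_le)
  then show ?case by blast
next
  case (trig_poly_add f g)
  then obtain B1 B2 where "\<forall>x. \<bar>f x\<bar> \<le> B1" "\<forall>x. \<bar>g x\<bar> \<le> B2"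
    by blast
  then have "\<bar>f x + g x\<bar> \<le> B1 + B2" for x
    by (meson abs_triangle_ineq add_mono order_trans)
  then show ?case by blast
qed

lemma integrable_trig_poly:
  assumes "prob_space M" "sets M = sets borel" "trig_poly f"
  shows "integrable M f"
  using trig_poly_bounded[OF assms(3)] integrable_bounded_continuous[OF assms(1,2) trig_poly_continuous[OF assms(3)]]
  by blast

lemma integral_trig_poly_eq:
  assumes M: "prob_space M" "sets M = sets borel" and N: "prob_space N" "sets N = sets borel"
    and char_eq: "\<And>t. char_euclidean M t = char_euclidean N t"
    and "trig_poly f"
  shows "(\<integral>x. f x \<partial>M) = (\<integral>x. f x \<partial>N)"
  using \<open>trig_poly f\<close>
proof (induction rule: trig_poly.induct)
  case (trig_poly_cos c t)
  show ?case
    using Re_char_euclidean[OF M, of t] Re_char_euclidean[OF N, of t] char_eq[of t] by simp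
next
  case (trig_poly_sin c t)
  show ?case
    using Im_char_euclidean[OF M, of t] Im_char_euclidean[OF N, of t] char_eq[of t] by simp
next
  case (trig_poly_add f g)
  then show ?case
    using integrable_trig_poly[OF M] integrable_trig_poly[OF N] by simp
qed

definition torus :: "real \<Rightarrow> 'a::euclidean_space \<Rightarrow> 'a \<times> 'a" where
  "torus \<omega> x = ((\<Sum>i\<in>Basis. cos (\<omega> * (x \<bullet> i)) *\<^sub>R i), (\<Sum>i\<in>Basis. sin (\<omega> * (x \<bullet> i)) *\<^sub>R i))"

lemma torus_inner:
  assumes "i \<in> Basis"
  shows "fst (torus \<omega> x) \<bullet> i = cos (\<omega> * (x \<bullet> i))" "snd (torus \<omega> x) \<bullet> i = sin (\<omega> * (x \<bullet> i))"
  using assms by (simp_all add: torus_def)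

lemma continuous_on_torus: "continuous_on A (torus \<omega>)"
  unfolding torus_def by (intro continuous_intros)

lemma trig_poly_polynomial_torus:
  fixes p :: "'a::euclidean_space \<times> 'a \<Rightarrow> real"
  assumes "real_polynomial_function p"
  shows "trig_poly (\<lambda>x::'a. p (torus \<omega> x))"
  using assms
proof (induction rule: real_polynomial_function.induct)
  case (linear p)
  have componentwise: "p z = (\<Sum>b\<in>Basis. (z \<bullet> b) * p b)" for z
    using Linear_Algebra.linear_componentwise[OF bounded_linear.linear[OF linear], of z 1] by simp
  have "trig_poly (\<lambda>x::'a. \<Sum>b\<in>Basis. (torus \<omega> x \<bullet> b) * p b)"
  proof (rule trig_poly_sum)
    fix b :: "'a \<times> 'a"
    assume "b \<in> Basis"
    then consider u where "u \<in> Basis" "b = (u, 0)" | u where "u \<in> Basis" "b = (0, u)"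
      unfolding Basis_prod_def by auto
    then show "trig_poly (\<lambda>x. (torus \<omega> x \<bullet> b) * p b)"
    proof cases
      case 1
      have "(torus \<omega> x \<bullet> b) * p b = p b * cos ((\<omega> *\<^sub>R u) \<bullet> x)" for x
        using 1 torus_inner[of u \<omega> x] by (simp add: inner_Pair_0 inner_commute[of u x])
      then show ?thesis
        by (simp only:) (rule trig_poly_cos)
    next
      case 2
      have "(torus \<omega> x \<bullet> b) * p b = p b * sin ((\<omega> *\<^sub>R u) \<bullet> x)" for x
        using 2 torus_inner[of u \<omega> x] by (simp add: inner_Pair_0 inner_commute[of u x])
      then show ?thesis
        by (simp only:) (rule trig_poly_sin)
    qed
  qed simp
  moreover have "(\<lambda>x. p (torus \<omega> x)) = (\<lambda>x::'a. \<Sum>b\<in>Basis. (torus \<omega> x \<bullet> b) * p b)"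
    by (intro ext componentwise)
  ultimately show ?case
    by (simp only:)
qed (auto intro: trig_poly_const trig_poly_add trig_poly_mult)

definition cube :: "real \<Rightarrow> 'a::euclidean_space set" where
  "cube r = cbox (- (r *\<^sub>R One)) (r *\<^sub>R One)"

lemma mem_cube: "x \<in> cube r \<longleftrightarrow> (\<forall>i\<in>Basis. \<bar>x \<bullet> i\<bar> \<le> r)"
  by (auto simp: cube_def mem_box abs_le_iff)

lemma compact_cube: "compact (cube r)"
  by (simp add: cube_def)

lemma torus_surj_cube:
  assumes "r > 0"
  obtains y where "y \<in> cube r" "torus (pi / r) y = torus (pi / r) x"
proof
  define k where "k i = round ((x \<bullet> i) / (2 * r))" for i
  define y where "y = (\<Sum>i\<in>Basis. (x \<bullet> i - 2 * r * of_int (k i)) *\<^sub>R i)"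
  have y_inner: "y \<bullet> i = x \<bullet> i - 2 * r * of_int (k i)" if "i \<in> Basis" for i
    using that by (simp add: y_def)
  have "\<bar>y \<bullet> i\<bar> \<le> r" if i: "i \<in> Basis" for i
  proof -
    have "\<bar>of_int (k i) - (x \<bullet> i) / (2 * r)\<bar> \<le> 1/2"
      unfolding k_def by (rule of_int_round_abs_le)
    then have "\<bar>2 * r * (of_int (k i) - (x \<bullet> i) / (2 * r))\<bar> \<le> 2 * r * (1/2)"
      using assms by (simp add: abs_mult)
    moreover have "2 * r * (of_int (k i) - (x \<bullet> i) / (2 * r)) = - (y \<bullet> i)"
      using assms i by (simp add: y_inner field_simps)
    ultimately show ?thesis
      by simp
  qed
  then show "y \<in> cube r"
    by (simp add: mem_cube)
  have sin_cos_eq: "sin (pi / r * (y \<bullet> i)) = sin (pi / r * (x \<bullet> i)) \<and>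
      cos (pi / r * (y \<bullet> i)) = cos (pi / r * (x \<bullet> i))" if i: "i \<in> Basis" for i
  proof -
    have "pi / r * (y \<bullet> i) = pi / r * (x \<bullet> i) + 2 * pi * of_int (- k i)"
      using assms i by (simp add: y_inner field_simps)
    then show ?thesis
      using sin_cos_eq_iff by blast
  qed
  show "torus (pi / r) y = torus (pi / r) x"
    by (rule prod_eqI; rule euclidean_eqI) (use sin_cos_eq in \<open>auto simp: torus_inner\<close>)
qed

lemma torus_eq_on_cube_imp_boundary:
  assumes "r > 0" and "x \<in> cube r" "y \<in> cube r"
    and torus_eq: "torus (pi / r) x = torus (pi / r) y" and "x \<noteq> y"
  obtains i where "i \<in> Basis" "\<bar>x \<bullet> i\<bar> = r" "\<bar>y \<bullet> i\<bar> = r"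
proof -
  obtain i where i: "i \<in> Basis" "x \<bullet> i \<noteq> y \<bullet> i"
    using \<open>x \<noteq> y\<close> euclidean_eqI by blast
  have "sin (pi / r * (x \<bullet> i)) = sin (pi / r * (y \<bullet> i)) \<and>
        cos (pi / r * (x \<bullet> i)) = cos (pi / r * (y \<bullet> i))"
    using torus_eq torus_inner[OF i(1), of "pi / r"] by metis
  then obtain n :: int where "pi / r * (x \<bullet> i) = pi / r * (y \<bullet> i) + 2 * pi * n"
    using sin_cos_eq_iff by blast
  then have "pi * (x \<bullet> i - y \<bullet> i) = pi * (2 * r * n)"
    using \<open>r > 0\<close> by (simp add: field_simps)
  then have diff: "x \<bullet> i - y \<bullet> i = 2 * r * n"
    by simp
  have bounds: "\<bar>x \<bullet> i\<bar> \<le> r" "\<bar>y \<bullet> i\<bar> \<le> r"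
    using assms(2,3) i(1) by (auto simp: mem_cube)
  then have "\<bar>2 * r * n\<bar> \<le> 2 * r"
    using diff by linarith
  then have "\<bar>real_of_int n\<bar> \<le> 1"
    using \<open>r > 0\<close> by (simp add: abs_mult)
  moreover have "n \<noteq> 0"
    using diff i(2) by auto
  ultimately have "n = 1 \<or> n = -1"
    by linarith
  then have "\<bar>x \<bullet> i\<bar> = r" "\<bar>y \<bullet> i\<bar> = r"
    using diff bounds by auto
  with i(1) show ?thesis
    using that by blast
qed

lemma (in prob_space) abs_integral_diff_le:
  fixes f g :: "'a \<Rightarrow> real"
  assumes "integrable M f" "integrable M g" "\<And>x. \<bar>f x - g x\<bar> \<le> e"
  shows "\<bar>(\<integral>x. f x \<partial>M) - (\<integral>x. g x \<partial>M)\<bar> \<le> e"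
proof -
  have "\<bar>(\<integral>x. f x \<partial>M) - (\<integral>x. g x \<partial>M)\<bar> = \<bar>\<integral>x. f x - g x \<partial>M\<bar>"
    using assms by simp
  also have "\<dots> \<le> (\<integral>x. \<bar>f x - g x\<bar> \<partial>M)"
    by (rule integral_abs_bound)
  also have "\<dots> \<le> (\<integral>x. e \<partial>M)"
    using assms by (intro integral_mono) auto
  finally show ?thesis
    by (simp add: prob_space)
qed

lemma integral_comp_torus_eq:
  fixes G :: "'a::euclidean_space \<times> 'a \<Rightarrow> real"
  assumes M: "prob_space M" "sets M = sets borel" and N: "prob_space N" "sets N = sets borel"
    and char_eq: "\<And>t. char_euclidean M t = char_euclidean N t"
    and S: "compact S" "range (torus \<omega>) \<subseteq> S" and G: "continuous_on S G"
  shows "(\<integral>x. G (torus \<omega> x) \<partial>M) = (\<integral>x. G (torus \<omega> x) \<partial>N)"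
proof -
  have cont: "continuous_on UNIV (\<lambda>x. G (torus \<omega> x))"
    using S(2) by (intro continuous_on_compose2[OF G continuous_on_torus]) auto
  obtain B where B: "\<And>z. z \<in> S \<Longrightarrow> norm (G z) \<le> B"
    using continuous_on_compact_bound[OF S(1) G] by blast
  have bound: "\<bar>G (torus \<omega> x)\<bar> \<le> B" for x
    using B[OF range_subsetD[OF S(2)]] by simp
  have "\<bar>(\<integral>x. G (torus \<omega> x) \<partial>M) - (\<integral>x. G (torus \<omega> x) \<partial>N)\<bar> \<le> e" if "e > 0" for e
  proof -
    obtain p where p: "polynomial_function p" "\<And>z. z \<in> S \<Longrightarrow> norm (G z - p z) < e / 2"
      using Stone_Weierstrass_polynomial_function[OF S(1) G, of "e / 2"] \<open>e > 0\<close> by auto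
    have trig: "trig_poly (\<lambda>x. p (torus \<omega> x))"
      using p(1) by (intro trig_poly_polynomial_torus) (simp add: real_polynomial_function_eq)
    have close: "\<bar>G (torus \<omega> x) - p (torus \<omega> x)\<bar> \<le> e / 2" for x
      using p(2)[OF range_subsetD[OF S(2)], of x] by simp
    have approx: "\<bar>(\<integral>x. G (torus \<omega> x) \<partial>L) - (\<integral>x. p (torus \<omega> x) \<partial>L)\<bar> \<le> e / 2"
      if "prob_space L" "sets L = sets borel" for L :: "'a measure"
      using that by (intro prob_space.abs_integral_diff_le close integrable_bounded_continuous[OF _ _ cont bound]
          integrable_trig_poly[OF _ _ trig])
    have "(\<integral>x. p (torus \<omega> x) \<partial>M) = (\<integral>x. p (torus \<omega> x) \<partial>N)"
      by (rule integral_trig_poly_eq[OF M N char_eq trig])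
    with approx[OF M] approx[OF N] show ?thesis
      unfolding abs_le_iff by linarith
  qed
  then have "(\<integral>x. G (torus \<omega> x) \<partial>M) - (\<integral>x. G (torus \<omega> x) \<partial>N) = 0"
    by (rule dense_eq0_I)
  then show ?thesis
    by (simp only: right_minus_eq)
qed

lemma torus_lift_continuous:
  fixes f :: "'a::euclidean_space \<Rightarrow> real"
  assumes "r > 0" and f: "continuous_on UNIV f"
    and f_zero: "\<And>x. (\<exists>i\<in>Basis. r \<le> \<bar>x \<bullet> i\<bar>) \<Longrightarrow> f x = 0"
  obtains G where "continuous_on (torus (pi / r) ` cube r) G"
    "\<And>x. x \<in> cube r \<Longrightarrow> G (torus (pi / r) x) = f x"
proof -
  define T where "T = (torus (pi / r) :: 'a \<Rightarrow> 'a \<times> 'a)"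
  have quotient: "quotient_map (top_of_set (cube r)) (top_of_set (T ` cube r)) T"
    using compact_cube[of r] continuous_on_torus[of "cube r"]
    by (intro continuous_imp_quotient_map)
       (auto simp: T_def Hausdorff_space_subtopology intro: compact_space_subtopology)
  have f_cube: "continuous_map (top_of_set (cube r)) euclidean f"
    using continuous_on_subset[OF f] by simp
  have f_eq: "f x = f y"
    if "x \<in> topspace (top_of_set (cube r))" "y \<in> topspace (top_of_set (cube r))" "T x = T y" for x y
  proof (cases "x = y")
    case False
    with that obtain i where "i \<in> Basis" "\<bar>x \<bullet> i\<bar> = r" "\<bar>y \<bullet> i\<bar> = r"
      using torus_eq_on_cube_imp_boundary[OF \<open>r > 0\<close>, of x y] by (auto simp: T_def)
    then show ?thesis
      using f_zero[of x] f_zero[of y] by force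
  qed simp
  obtain G where "continuous_map (top_of_set (T ` cube r)) euclidean G"
      "G ` topspace (top_of_set (T ` cube r)) = f ` topspace (top_of_set (cube r))"
      "\<And>x. x \<in> topspace (top_of_set (cube r)) \<Longrightarrow> G (T x) = f x"
    using quotient_map_lift_exists[OF quotient f_cube] f_eq by blast
  with that show ?thesis
    by (simp add: T_def)
qed

lemma exists_periodization_integral_eq:
  fixes f :: "'a::euclidean_space \<Rightarrow> real"
  assumes "r > 0" and f: "continuous_on UNIV f" "\<And>x. \<bar>f x\<bar> \<le> B"
    and f_zero: "\<And>x. (\<exists>i\<in>Basis. r \<le> \<bar>x \<bullet> i\<bar>) \<Longrightarrow> f x = 0"
    and M: "prob_space M" "sets M = sets borel" and N: "prob_space N" "sets N = sets borel"
    and char_eq: "\<And>t. char_euclidean M t = char_euclidean N t"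
  obtains g where "continuous_on UNIV g" "\<And>x. \<bar>g x\<bar> \<le> B" "\<And>x. x \<in> cube r \<Longrightarrow> g x = f x"
    "(\<integral>x. g x \<partial>M) = (\<integral>x. g x \<partial>N)"
proof -
  obtain G where G: "continuous_on (torus (pi / r) ` cube r) G"
    "\<And>x. x \<in> cube r \<Longrightarrow> G (torus (pi / r) x) = f x"
    using torus_lift_continuous[OF \<open>r > 0\<close> f(1) f_zero] by blast
  have surj: "\<exists>y\<in>cube r. torus (pi / r) y = torus (pi / r) x" for x
    using torus_surj_cube[OF \<open>r > 0\<close>, of x] by blast
  then have range: "range (torus (pi / r)) \<subseteq> torus (pi / r) ` cube r"
    by (metis image_eqI image_subsetI)
  show ?thesis
  proof (rule that)
    show "continuous_on UNIV (\<lambda>x. G (torus (pi / r) x))"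
      using range by (intro continuous_on_compose2[OF G(1) continuous_on_torus]) auto
    show "\<bar>G (torus (pi / r) x)\<bar> \<le> B" for x
      using surj[of x] G(2) f(2) by metis
    show "G (torus (pi / r) x) = f x" if "x \<in> cube r" for x
      using G(2) that .
    show "(\<integral>x. G (torus (pi / r) x) \<partial>M) = (\<integral>x. G (torus (pi / r) x) \<partial>N)"
      by (intro integral_comp_torus_eq[OF M N char_eq _ range G(1)]
          compact_continuous_image[OF continuous_on_torus compact_cube])
  qed
qed

lemma integral_eq_of_tendsto:
  fixes f :: "nat \<Rightarrow> 'a::topological_space \<Rightarrow> real"
  assumes M: "prob_space M" "sets M = sets borel" and N: "prob_space N" "sets N = sets borel"
    and f: "\<And>n. f n \<in> borel_measurable borel" "\<And>n x. \<bar>f n x\<bar> \<le> B"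
    and lim: "\<And>x. (\<lambda>n. f n x) \<longlonglongrightarrow> g x"
    and eq: "\<And>n. (\<integral>x. f n x \<partial>M) = (\<integral>x. f n x \<partial>N)"
  shows "(\<integral>x. g x \<partial>M) = (\<integral>x. g x \<partial>N)"
proof -
  have conv: "(\<lambda>n. \<integral>x. f n x \<partial>L) \<longlonglongrightarrow> (\<integral>x. g x \<partial>L)"
    if "prob_space L" "sets L = sets borel" for L :: "'a measure"
  proof -
    interpret prob_space L by fact
    have [measurable_cong]: "sets L = sets borel" by fact
    have [measurable]: "g \<in> borel_measurable borel"
      using lim f(1) by (rule borel_measurable_LIMSEQ_real)
    show ?thesis
      using f by (intro integral_dominated_convergence[where w="\<lambda>_. B"]) (auto intro: lim)
  qed
  have "(\<lambda>n. \<integral>x. f n x \<partial>N) \<longlonglongrightarrow> (\<integral>x. g x \<partial>M)"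
    using conv[OF M] by (simp add: eq)
  then show ?thesis
    by (rule LIMSEQ_unique[OF _ conv[OF N]])
qed

lemma integral_eq_if_vanishes_outside_cube:
  fixes f :: "'a::euclidean_space \<Rightarrow> real"
  assumes "a > 0" and f: "continuous_on UNIV f" "\<And>x. \<bar>f x\<bar> \<le> B"
    and f_zero: "\<And>x. (\<exists>i\<in>Basis. a \<le> \<bar>x \<bullet> i\<bar>) \<Longrightarrow> f x = 0"
    and M: "prob_space M" "sets M = sets borel" and N: "prob_space N" "sets N = sets borel"
    and char_eq: "\<And>t. char_euclidean M t = char_euclidean N t"
  shows "(\<integral>x. f x \<partial>M) = (\<integral>x. f x \<partial>N)"
proof -
  have "\<exists>g. continuous_on UNIV g \<and> (\<forall>x. \<bar>g x\<bar> \<le> B) \<and> (\<forall>x\<in>cube (a + real n). g x = f x) \<and>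
      (\<integral>x. g x \<partial>M) = (\<integral>x. g x \<partial>N)" for n :: nat
  proof -
    have "a + real n > 0"
      using \<open>a > 0\<close> by simp
    moreover have "f x = 0" if "\<exists>i\<in>Basis. a + real n \<le> \<bar>x \<bullet> i\<bar>" for x
      using that by (intro f_zero) force
    ultimately obtain g where "continuous_on UNIV g" "\<And>x. \<bar>g x\<bar> \<le> B" "\<And>x. x \<in> cube (a + real n) \<Longrightarrow> g x = f x"
        "(\<integral>x. g x \<partial>M) = (\<integral>x. g x \<partial>N)"
      using exists_periodization_integral_eq[OF _ f _ M N char_eq] by blast
    then show ?thesis
      by blast
  qed
  then obtain g where g: "\<And>n. continuous_on UNIV (g n)" "\<And>n x. \<bar>g n x\<bar> \<le> B"
      "\<And>n x. x \<in> cube (a + real n) \<Longrightarrow> g n x = f x" "\<And>n. (\<integral>x. g n x \<partial>M) = (\<integral>x. g n x \<partial>N)"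
    by metis
  have lim: "(\<lambda>n. g n x) \<longlonglongrightarrow> f x" for x
  proof (rule tendsto_eventually, rule eventually_sequentiallyI)
    fix n
    assume "nat \<lceil>norm x\<rceil> \<le> n"
    then have "\<bar>x \<bullet> i\<bar> \<le> a + real n" if "i \<in> Basis" for i
      using Basis_le_norm[OF that, of x] \<open>a > 0\<close> by linarith
    then show "g n x = f x"
      by (intro g(3)) (simp add: mem_cube)
  qed
  show ?thesis
  proof (rule integral_eq_of_tendsto[OF M N _ g(2) lim g(4)])
    show "g n \<in> borel_measurable borel" for n
      using g(1) by (rule borel_measurable_continuous_onI)
  qed
qed

lemma tendsto_indicator_closed:
  fixes F :: "'a::real_normed_vector set"
  assumes "closed F" "F \<noteq> {}"
  shows "(\<lambda>n. max 0 (1 - real n * infdist x F) * max 0 (min 1 (real n - norm x))) \<longlonglongrightarrow> indicator F x"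
proof (rule tendsto_eventually)
  show "\<forall>\<^sub>F n in sequentially. max 0 (1 - real n * infdist x F) * max 0 (min 1 (real n - norm x))
      = indicator F x"
  proof (cases "x \<in> F")
    case True
    then have "infdist x F = 0"
      by simp
    moreover obtain N :: nat where "norm x + 1 \<le> real N"
      using real_arch_simple by blast
    ultimately show ?thesis
      using True by (intro eventually_sequentiallyI[of N]) auto
  next
    case False
    then have "infdist x F > 0"
      using in_closed_iff_infdist_zero[OF assms] infdist_nonneg[of x F] by auto
    moreover obtain N :: nat where "1 / infdist x F \<le> real N"
      using real_arch_simple by blast
    ultimately have "1 \<le> real N * infdist x F"
      by (simp add: field_simps)
    then have "1 \<le> real n * infdist x F" if "N \<le> n" for n
      using that \<open>infdist x F > 0\<close> by (meson mult_right_mono of_nat_le_iff order_trans less_imp_le)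
    then show ?thesis
      using False by (intro eventually_sequentiallyI[of N]) auto
  qed
qed

lemma measure_closed_eq_if_char_euclidean_eq:
  fixes M N :: "'a::euclidean_space measure"
  assumes M: "prob_space M" "sets M = sets borel" and N: "prob_space N" "sets N = sets borel"
    and char_eq: "\<And>t. char_euclidean M t = char_euclidean N t"
    and "closed F"
  shows "measure M F = measure N F"
proof (cases "F = {}")
  case False
  define \<phi> where "\<phi> n x = max 0 (1 - real n * infdist x F) * max 0 (min 1 (real n - norm x))" for n x
  have \<phi>_cont: "continuous_on UNIV (\<phi> n)" for n
    unfolding \<phi>_def by (intro continuous_intros)
  have \<phi>_bound: "\<bar>\<phi> n x\<bar> \<le> 1" for n x
    unfolding \<phi>_def using infdist_nonneg[of x F] by (simp add: abs_mult mult_le_one)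
  have "\<phi> n x = 0" if "\<exists>i\<in>Basis. real n + 1 \<le> \<bar>x \<bullet> i\<bar>" for n x
    using that Basis_le_norm[of _ x] by (force simp: \<phi>_def)
  then have \<phi>_eq: "(\<integral>x. \<phi> n x \<partial>M) = (\<integral>x. \<phi> n x \<partial>N)" for n
    by (intro integral_eq_if_vanishes_outside_cube[OF _ \<phi>_cont \<phi>_bound _ M N char_eq, of "real n + 1"]) auto
  have \<phi>_measurable: "\<phi> n \<in> borel_measurable borel" for n
    using \<phi>_cont by (rule borel_measurable_continuous_onI)
  have \<phi>_lim: "(\<lambda>n. \<phi> n x) \<longlonglongrightarrow> indicator F x" for x
    unfolding \<phi>_def by (rule tendsto_indicator_closed[OF \<open>closed F\<close> False])
  have "(\<integral>x. indicator F x \<partial>M) = (\<integral>x. indicator F x \<partial>N :: real)"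
    by (rule integral_eq_of_tendsto[OF M N \<phi>_measurable \<phi>_bound \<phi>_lim \<phi>_eq])
  then show ?thesis
    using sets_eq_imp_space_eq[OF M(2)] sets_eq_imp_space_eq[OF N(2)] by simp
qed simp

theorem char_euclidean_unique:
  fixes M N :: "'a::euclidean_space measure"
  assumes M: "prob_space M" "sets M = sets borel" and N: "prob_space N" "sets N = sets borel"
    and char_eq: "\<And>t. char_euclidean M t = char_euclidean N t"
  shows "M = N"
proof -
  interpret M: prob_space M by fact
  interpret N: prob_space N by fact
  have "sets (borel :: 'a measure) = sigma_sets UNIV (Collect closed)"
    by (simp add: borel_eq_closed sets_measure_of)
  then show ?thesis
  proof (intro measure_eqI_generator_eq[where E="Collect closed" and \<Omega>=UNIV and A="\<lambda>_. UNIV"])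
    show "Int_stable (Collect closed :: 'a set set)"
      by (auto simp: Int_stable_def)
    show "emeasure M F = emeasure N F" if "F \<in> Collect closed" for F
      using measure_closed_eq_if_char_euclidean_eq[OF M N char_eq, of F] that
      by (simp add: M.emeasure_eq_measure N.emeasure_eq_measure)
  qed (use M(2) N(2) in \<open>auto simp: closed_UNIV\<close>)
qed

section \<open>Positivity of the smoothed sliced distance\<close>

lemma DPSWD_pow_eq_smoothed:
  "DPSWD_pow \<sigma> q M N =
     (\<integral>\<^sup>+u. wasserstein_pow q (smoothed_radon_proj \<sigma> u M) (smoothed_radon_proj \<sigma> u N) \<partial>sphere_uniform)"
  by (simp add: DPSWD_pow_def smoothed_radon_proj_def)

lemma norm_char_diff_smoothed_radon_proj:
  assumes "prob_space M" "sets M = sets borel" "prob_space N" "sets N = sets borel" "\<sigma> > 0"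
  shows "cmod (char (smoothed_radon_proj \<sigma> u M) s - char (smoothed_radon_proj \<sigma> u N) s)
       = cmod (char_euclidean M (s *\<^sub>R u) - char_euclidean N (s *\<^sub>R u)) * exp (- (\<sigma> * s)\<^sup>2 / 2)"
proof -
  have "char (smoothed_radon_proj \<sigma> u M) s - char (smoothed_radon_proj \<sigma> u N) s
      = (char_euclidean M (s *\<^sub>R u) - char_euclidean N (s *\<^sub>R u)) * exp (- (\<sigma> * s)\<^sup>2 / 2)"
    using assms by (simp add: char_smoothed_radon_proj algebra_simps)
  then show ?thesis
    by (simp add: norm_mult)
qed

lemma wasserstein_pow_smoothed_ge_near:
  fixes M N :: "'a::euclidean_space measure"
  assumes M: "prob_space M" "sets M = sets borel" and N: "prob_space N" "sets N = sets borel"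
    and "\<sigma> > 0" "0 \<le> q" "s > 0" and char_ne: "char_euclidean M (s *\<^sub>R u0) \<noteq> char_euclidean N (s *\<^sub>R u0)"
  obtains r c where "r > 0" "c > 0"
    "\<And>u. u \<in> ball u0 r \<Longrightarrow>
       ennreal c \<le> wasserstein_pow q (smoothed_radon_proj \<sigma> u M) (smoothed_radon_proj \<sigma> u N)"
proof -
  define h where "h u = cmod (char_euclidean M (s *\<^sub>R u) - char_euclidean N (s *\<^sub>R u)) * exp (- (\<sigma> * s)\<^sup>2 / 2)"
    for u
  have "h u0 > 0"
    using char_ne by (simp add: h_def)
  moreover have "isCont h u0"
    unfolding h_def by (intro continuous_intros isCont_o2[OF _ isCont_char_euclidean] M N)
  ultimately obtain r where "r > 0" and r: "\<And>u. dist u u0 < r \<Longrightarrow> dist (h u) (h u0) < h u0 / 2"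
    unfolding continuous_at_eps_delta by (metis half_gt_zero)
  define c where "c = (h u0 / (4 * s)) powr q * (h u0 / 8)"
  show ?thesis
  proof (rule that)
    show "r > 0" by fact
    show "c > 0"
      using \<open>s > 0\<close> \<open>h u0 > 0\<close> by (simp add: c_def)
    fix u
    assume "u \<in> ball u0 r"
    then have "h u0 / 2 \<le> h u"
      using r[of u] abs_ge_self[of "h u0 - h u"] by (simp add: dist_commute dist_real_def)
    then have "c \<le> (h u / (2 * s)) powr q * (h u / 4)"
      unfolding c_def using \<open>s > 0\<close> \<open>h u0 > 0\<close> \<open>0 \<le> q\<close>
      by (intro mult_mono powr_mono2 divide_right_mono) (auto simp: field_simps)
    also have "ennreal \<dots> \<le> wasserstein_pow q (smoothed_radon_proj \<sigma> u M) (smoothed_radon_proj \<sigma> u N)"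
      using wasserstein_pow_ge_char_diff[OF real_distribution_smoothed_radon_proj[OF M \<open>\<sigma> > 0\<close>, of u]
          real_distribution_smoothed_radon_proj[OF N \<open>\<sigma> > 0\<close>, of u] \<open>s > 0\<close> \<open>0 \<le> q\<close>]
      unfolding norm_char_diff_smoothed_radon_proj[OF M N \<open>\<sigma> > 0\<close>] h_def .
    finally show "ennreal c \<le> wasserstein_pow q (smoothed_radon_proj \<sigma> u M) (smoothed_radon_proj \<sigma> u N)"
      by (simp add: ennreal_leI)
  qed
qed

lemma DPSWD_pow_pos_if_char_euclidean_ne:
  fixes M N :: "'a::euclidean_space measure"
  assumes M: "prob_space M" "sets M = sets borel" and N: "prob_space N" "sets N = sets borel"
    and "\<sigma> > 0" "0 \<le> q" and char_ne: "char_euclidean M t \<noteq> char_euclidean N t"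
  shows "0 < DPSWD_pow \<sigma> q M N"
proof -
  have "t \<noteq> 0"
    using char_ne char_euclidean_zero[OF M(1)] char_euclidean_zero[OF N(1)] by auto
  then have "norm t > 0" "norm (sgn t) = 1" "norm t *\<^sub>R sgn t = t"
    by (simp_all add: norm_sgn sgn_div_norm)
  then obtain r c where "r > 0" "c > 0" and W_ge: "\<And>u. u \<in> ball (sgn t) r \<Longrightarrow>
      ennreal c \<le> wasserstein_pow q (smoothed_radon_proj \<sigma> u M) (smoothed_radon_proj \<sigma> u N)"
    using wasserstein_pow_smoothed_ge_near[OF M N \<open>\<sigma> > 0\<close> \<open>0 \<le> q\<close>, of "norm t" "sgn t"] char_ne
    by metis
  have "0 < ennreal c * emeasure sphere_uniform (ball (sgn t) r)"
    using emeasure_sphere_uniform_ball_pos[OF \<open>norm (sgn t) = 1\<close> \<open>r > 0\<close>] \<open>c > 0\<close>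
    by (simp add: ennreal_zero_less_mult_iff)
  also have "\<dots> \<le> DPSWD_pow \<sigma> q M N"
    unfolding DPSWD_pow_eq_smoothed using W_ge
    by (subst nn_integral_cmult_indicator[symmetric]) (auto intro!: nn_integral_mono
        simp: sphere_uniform_def indicator_def)
  finally show ?thesis .
qed

theorem mainTheorem4:
  fixes \<mu> \<nu> :: "'a::euclidean_space measure" and q :: real
  assumes "prob_space \<mu>" "sets \<mu> = sets borel" "absolutely_continuous lborel \<mu>"
    and "prob_space \<nu>" "sets \<nu> = sets borel" "absolutely_continuous lborel \<nu>"
    and "q \<ge> 1"
  shows "\<forall>\<sigma>>0. DPSWD_pow \<sigma> q \<mu> \<nu> = 0 \<longleftrightarrow> \<mu> = \<nu>"
proof (intro allI impI iffI)
  fix \<sigma> :: real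
  assume "\<mu> = \<nu>"
  then show "DPSWD_pow \<sigma> q \<mu> \<nu> = 0"
    by (simp add: DPSWD_pow_def wasserstein_pow_def)
next
  fix \<sigma> :: real
  assume "\<sigma> > 0" and "DPSWD_pow \<sigma> q \<mu> \<nu> = 0"
  then have "char_euclidean \<mu> t = char_euclidean \<nu> t" for t
    using DPSWD_pow_pos_if_char_euclidean_ne[OF assms(1,2,4,5), of \<sigma> q t] \<open>q \<ge> 1\<close> by fastforce
  then show "\<mu> = \<nu>"
    by (rule char_euclidean_unique[OF assms(1,2,4,5)])
qed

end
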